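(* Let $G$ be a finite group and let $\phi=a_1\chi_1+\cdots+a_q\chi_q$ be a virtual character of $G$, where $a_i\in\mathbb{R}$ and $\chi_i$ are irreducible complex characters of $G$ with $n_i=\chi_i(1)$, $i=1,\dots,q$. Then for every $g\in G$, $$\mathbb{E}(\xi_{g,\phi})=\sum_{i=1}^q \frac{a_i}{n_i^2}\,\mathrm{Re}(\chi_i(g)).$$ If $\phi$ is non-negative, then for every $g\in G$, $$c(g)\;\le\;\frac{\mathbb{E}(\xi_{g,\phi})}{\phi(1)}\;=\;\frac{(a_1/n_1^2)\mathrm{Re}(\chi_1(g))+\cdots+(a_q/n_q^2)\mathrm{Re}(\chi_q(g))}{a_1n_1+\cdots+a_qn_q},$$ and in particular $$c(G)=c(1)\;\le\;\frac{a_1/n_1+\cdots+a_q/n_q}{a_1n_1+\cdots+a_qn_q}.$$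
   Context: $G$ is a finite group of order $m$; $G\times G$ carries the uniform probability measure (mass $1/m^2$ per point) and $\mathbb{E}$ denotes expectation with respect to it. For $g\in G$, $c(g)=|\{(x,y)\in G\times G:[x,y]=g\}|/|G\times G|$ and $c(G)=c(1)$. For a virtual character $\phi$ and $g\in G$, $\xi_{g,\phi}$ is the real random variable on $G\times G$ given by $\xi_{g,\phi}(a,b)=\mathrm{Re}\big(\phi([a,b]^{-1}g)\big)=\sum_i a_i\mathrm{Re}(\chi_i([a,b]^{-1}g))$. A virtual character $\phi=\sum_{\chi\in\mathrm{Irr}(G)}a_\chi\chi$ is called non-negative if (a) $\mathrm{Re}(\phi(h))\ge0$ for all $h\in G$, and (b) all coefficients $a_\chi$ are non-negative real numbers and at least one is non-zero. *)

theory Defs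
  imports "HOL-Algebra.Group" "Jordan_Normal_Form.Matrix"
begin

definition mat_tr :: "complex mat \<Rightarrow> complex" where
  "mat_tr A = (\<Sum>i<dim_row A. A $$ (i, i))"

definition complex_rep :: "('a, 'b) monoid_scheme \<Rightarrow> nat \<Rightarrow> ('a \<Rightarrow> complex mat) \<Rightarrow> bool" where
  "complex_rep G n \<rho> \<longleftrightarrow>
     (\<forall>g\<in>carrier G. \<rho> g \<in> carrier_mat n n) \<and>
     \<rho> \<one>\<^bsub>G\<^esub> = 1\<^sub>m n \<and>
     (\<forall>g\<in>carrier G. \<forall>h\<in>carrier G. \<rho> (g \<otimes>\<^bsub>G\<^esub> h) = \<rho> g * \<rho> h)"

definition subspace_vec :: "nat \<Rightarrow> complex vec set \<Rightarrow> bool" where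
  "subspace_vec n W \<longleftrightarrow> W \<subseteq> carrier_vec n \<and> 0\<^sub>v n \<in> W \<and>
     (\<forall>v\<in>W. \<forall>w\<in>W. v + w \<in> W) \<and> (\<forall>c. \<forall>v\<in>W. c \<cdot>\<^sub>v v \<in> W)"

definition irreducible_rep :: "('a, 'b) monoid_scheme \<Rightarrow> nat \<Rightarrow> ('a \<Rightarrow> complex mat) \<Rightarrow> bool" where
  "irreducible_rep G n \<rho> \<longleftrightarrow> complex_rep G n \<rho> \<and> n > 0 \<and>
     (\<forall>W. subspace_vec n W \<and> (\<forall>g\<in>carrier G. \<forall>w\<in>W. \<rho> g *\<^sub>v w \<in> W)
          \<longrightarrow> W = {0\<^sub>v n} \<or> W = carrier_vec n)"

definition irr_char :: "('a, 'b) monoid_scheme \<Rightarrow> ('a \<Rightarrow> complex) \<Rightarrow> bool" where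
  "irr_char G \<chi> \<longleftrightarrow> (\<exists>n \<rho>. irreducible_rep G n \<rho> \<and> (\<forall>g\<in>carrier G. \<chi> g = mat_tr (\<rho> g)))"

definition comm :: "('a, 'b) monoid_scheme \<Rightarrow> 'a \<Rightarrow> 'a \<Rightarrow> 'a" where
  "comm G x y = inv\<^bsub>G\<^esub> x \<otimes>\<^bsub>G\<^esub> inv\<^bsub>G\<^esub> y \<otimes>\<^bsub>G\<^esub> x \<otimes>\<^bsub>G\<^esub> y"

definition comm_prob :: "('a, 'b) monoid_scheme \<Rightarrow> 'a \<Rightarrow> real" where
  "comm_prob G g = real (card {(x, y). x \<in> carrier G \<and> y \<in> carrier G \<and> comm G x y = g})
                   / real (card (carrier G \<times> carrier G))"

definition expect_GG :: "('a, 'b) monoid_scheme \<Rightarrow> ('a \<times> 'a \<Rightarrow> real) \<Rightarrow> real" where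
  "expect_GG G f = (\<Sum>p\<in>carrier G \<times> carrier G. f p) / real (card (carrier G \<times> carrier G))"

definition virt_char :: "nat \<Rightarrow> (nat \<Rightarrow> real) \<Rightarrow> (nat \<Rightarrow> 'a \<Rightarrow> complex) \<Rightarrow> 'a \<Rightarrow> complex" where
  "virt_char q a \<chi> h = (\<Sum>i<q. complex_of_real (a i) * \<chi> i h)"

definition xi :: "('a, 'b) monoid_scheme \<Rightarrow> 'a \<Rightarrow> ('a \<Rightarrow> complex) \<Rightarrow> 'a \<times> 'a \<Rightarrow> real" where
  "xi G g \<phi> p = Re (\<phi> (inv\<^bsub>G\<^esub> (comm G (fst p) (snd p)) \<otimes>\<^bsub>G\<^esub> g))"

(* non-negative virtual character, relative to its decomposition into the
   (pairwise distinct) irreducible characters chi_0, ..., chi_{q-1} *)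
definition nonneg_virt_char :: "('a, 'b) monoid_scheme \<Rightarrow> nat \<Rightarrow> (nat \<Rightarrow> real) \<Rightarrow> (nat \<Rightarrow> 'a \<Rightarrow> complex) \<Rightarrow> bool" where
  "nonneg_virt_char G q a \<chi> \<longleftrightarrow>
     (\<forall>h\<in>carrier G. Re (virt_char q a \<chi> h) \<ge> 0) \<and>
     (\<forall>i<q. a i \<ge> 0) \<and> (\<exists>i<q. a i \<noteq> 0)"

end

theory Submission
  imports Defs "Jordan_Normal_Form.Spectral_Radius"
begin

(* By linearity in phi it suffices to treat an irreducible character chi = tr o rho of degree n.
   By Schur's lemma the conjugation sum  sum_x rho(x^-1) A rho(x)  is the scalar |G| tr(A) / n;
   this gives the orthogonality relations for matrix entries and hence the convolution identity
   sum_y chi(y) chi(g y^-1) = (|G|/n) chi(g).  Under the trace, rho([x,y]^-1 g) is the conjugate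
   of rho(y) by rho(x) times rho(g y^-1), so summing over x and then over y gives
   sum_{x,y} chi([x,y]^-1 g) = (|G|/n)^2 chi(g), which is the formula for E(xi).
   If phi is non-negative then xi is non-negative and equals phi(1) on the pairs with [x,y] = g,
   whence c(g) phi(1) <= E(xi). *)

lemma index_mult_mat_sum:
  assumes "A \<in> carrier_mat n m" "B \<in> carrier_mat m p" "i < n" "j < p"
  shows "(A * B) $$ (i, j) = (\<Sum>k<m. A $$ (i, k) * B $$ (k, j))"
  using assms by (auto simp: scalar_prod_def atLeast0LessThan intro!: sum.cong)

lemma mat_tr_carrier: "A \<in> carrier_mat n n \<Longrightarrow> mat_tr A = (\<Sum>i<n. A $$ (i, i))"
  by (simp add: mat_tr_def)

lemma mat_tr_mult_commute:
  assumes "A \<in> carrier_mat n m" "B \<in> carrier_mat m n"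
  shows "mat_tr (A * B) = mat_tr (B * A)"
proof -
  have "mat_tr (A * B) = (\<Sum>i<n. \<Sum>k<m. A $$ (i, k) * B $$ (k, i))"
    using assms by (auto simp: mat_tr_def scalar_prod_def atLeast0LessThan intro!: sum.cong)
  also have "\<dots> = (\<Sum>k<m. \<Sum>i<n. B $$ (k, i) * A $$ (i, k))"
    by (subst sum.swap) (simp add: mult.commute)
  also have "\<dots> = mat_tr (B * A)"
    using assms by (auto simp: mat_tr_def scalar_prod_def atLeast0LessThan intro!: sum.cong)
  finally show ?thesis .
qed

lemma mat_tr_one: "mat_tr (1\<^sub>m n) = of_nat n"
  by (simp add: mat_tr_def)

lemma mat_tr_smult: "A \<in> carrier_mat n n \<Longrightarrow> mat_tr (c \<cdot>\<^sub>m A) = c * mat_tr A"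
  by (simp add: mat_tr_def sum_distrib_left)

lemma mat_tr_conj:
  assumes "P \<in> carrier_mat n n" "A \<in> carrier_mat n n" "Q \<in> carrier_mat n n" "Q * P = 1\<^sub>m n"
  shows "mat_tr (P * A * Q) = mat_tr A"
proof -
  have "mat_tr (P * A * Q) = mat_tr (P * (A * Q))"
    using assms by simp
  also have "\<dots> = mat_tr (A * (Q * P))"
    using assms by (simp add: mat_tr_mult_commute[of P n n])
  finally show ?thesis
    using assms by simp
qed

definition elementary_mat :: "nat \<Rightarrow> nat \<Rightarrow> nat \<Rightarrow> 'a :: zero_neq_one mat" where
  "elementary_mat n b c = mat n n (\<lambda>(i, j). if i = b \<and> j = c then 1 else 0)"

lemma elementary_mat_carrier [simp]: "elementary_mat n b c \<in> carrier_mat n n"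
  by (simp add: elementary_mat_def)

lemma mat_tr_elementary_mat: "b < n \<Longrightarrow> mat_tr (elementary_mat n b c) = (if b = c then 1 else 0)"
  by (simp add: mat_tr_def elementary_mat_def sum.delta flip: if_if_eq_conj)

lemma index_mult_elementary_mat:
  fixes P Q :: "'a :: comm_semiring_1 mat"
  assumes "P \<in> carrier_mat n n" "Q \<in> carrier_mat n n" "a < n" "b < n" "c < n" "d < n"
  shows "(P * elementary_mat n b c * Q) $$ (a, d) = P $$ (a, b) * Q $$ (c, d)"
  using assms
  by (simp add: index_mult_mat_sum[of _ n n _ n] elementary_mat_def sum.delta
      if_distrib[of "\<lambda>y. y * _"] if_distrib[of "\<lambda>y. _ * y"]
      del: index_mult_mat flip: if_if_eq_conj cong: if_cong)

(* Sums of n x n matrices, taken entrywise: 'a mat has no comm_monoid_add instance. *)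
definition mat_sum :: "nat \<Rightarrow> 'b set \<Rightarrow> ('b \<Rightarrow> 'a :: comm_monoid_add mat) \<Rightarrow> 'a mat" where
  "mat_sum n S f = mat n n (\<lambda>(i, j). \<Sum>x\<in>S. f x $$ (i, j))"

lemma mat_sum_carrier [simp]: "mat_sum n S f \<in> carrier_mat n n"
  and dim_row_mat_sum [simp]: "dim_row (mat_sum n S f) = n"
  and dim_col_mat_sum [simp]: "dim_col (mat_sum n S f) = n"
  by (simp_all add: mat_sum_def)

lemma index_mat_sum: "i < n \<Longrightarrow> j < n \<Longrightarrow> mat_sum n S f $$ (i, j) = (\<Sum>x\<in>S. f x $$ (i, j))"
  by (simp add: mat_sum_def)

lemma mat_sum_cong:
  "(\<And>x. x \<in> S \<Longrightarrow> f x = g x) \<Longrightarrow> mat_sum n S f = mat_sum n S g"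
  by (simp add: mat_sum_def)

lemma mat_sum_reindex:
  "bij_betw h T S \<Longrightarrow> mat_sum n S f = mat_sum n T (f \<circ> h)"
  by (auto simp: mat_sum_def sum.reindex_bij_betw[symmetric] intro!: eq_matI)

lemma mat_sum_mult:
  fixes f :: "'b \<Rightarrow> 'a :: comm_semiring_0 mat"
  assumes f: "\<And>x. x \<in> S \<Longrightarrow> f x \<in> carrier_mat n n" and C: "C \<in> carrier_mat n n"
  shows "mat_sum n S f * C = mat_sum n S (\<lambda>x. f x * C)"
proof (rule eq_matI)
  fix i j assume "i < dim_row (mat_sum n S (\<lambda>x. f x * C))" "j < dim_col (mat_sum n S (\<lambda>x. f x * C))"
  then have ij: "i < n" "j < n" by auto
  have "(mat_sum n S f * C) $$ (i, j) = (\<Sum>k<n. \<Sum>x\<in>S. f x $$ (i, k) * C $$ (k, j))"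
    using ij C
    by (simp add: index_mult_mat_sum[of _ n n _ n] index_mat_sum sum_distrib_right del: index_mult_mat)
  also have "\<dots> = (\<Sum>x\<in>S. (f x * C) $$ (i, j))"
    using ij C f by (subst sum.swap) (simp add: index_mult_mat_sum[of _ n n _ n] del: index_mult_mat)
  finally show "(mat_sum n S f * C) $$ (i, j) = mat_sum n S (\<lambda>x. f x * C) $$ (i, j)"
    using ij by (simp add: index_mat_sum)
qed (use C in auto)

lemma mult_mat_sum:
  fixes f :: "'b \<Rightarrow> 'a :: comm_semiring_0 mat"
  assumes f: "\<And>x. x \<in> S \<Longrightarrow> f x \<in> carrier_mat n n" and C: "C \<in> carrier_mat n n"
  shows "C * mat_sum n S f = mat_sum n S (\<lambda>x. C * f x)"
proof (rule eq_matI)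
  fix i j assume "i < dim_row (mat_sum n S (\<lambda>x. C * f x))" "j < dim_col (mat_sum n S (\<lambda>x. C * f x))"
  then have ij: "i < n" "j < n" by auto
  have "(C * mat_sum n S f) $$ (i, j) = (\<Sum>k<n. \<Sum>x\<in>S. C $$ (i, k) * f x $$ (k, j))"
    using ij C
    by (simp add: index_mult_mat_sum[of _ n n _ n] index_mat_sum sum_distrib_left del: index_mult_mat)
  also have "\<dots> = (\<Sum>x\<in>S. (C * f x) $$ (i, j))"
    using ij C f by (subst sum.swap) (simp add: index_mult_mat_sum[of _ n n _ n] del: index_mult_mat)
  finally show "(C * mat_sum n S f) $$ (i, j) = mat_sum n S (\<lambda>x. C * f x) $$ (i, j)"
    using ij by (simp add: index_mat_sum)
qed (use C in auto)

lemma mat_tr_mat_sum: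
  assumes "\<And>x. x \<in> S \<Longrightarrow> f x \<in> carrier_mat n n"
  shows "mat_tr (mat_sum n S f) = (\<Sum>x\<in>S. mat_tr (f x))"
  using assms by (simp add: mat_tr_carrier[of _ n] index_mat_sum sum.swap[of _ S])

lemma subspace_vec_eigenspace:
  assumes "T \<in> carrier_mat n n"
  shows "subspace_vec n {w \<in> carrier_vec n. T *\<^sub>v w = c \<cdot>\<^sub>v w}"
  using assms
  by (auto simp: subspace_vec_def mult_add_distrib_mat_vec smult_add_distrib_vec
      mult_mat_vec smult_smult_assoc mult.commute)

lemma mat_eq_smult_one_if_mult_vec:
  fixes T :: "'a :: semiring_1 mat"
  assumes T: "T \<in> carrier_mat n n" and Tw: "\<And>w. w \<in> carrier_vec n \<Longrightarrow> T *\<^sub>v w = c \<cdot>\<^sub>v w"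
  shows "T = c \<cdot>\<^sub>m 1\<^sub>m n"
proof (rule eq_matI)
  fix i j assume "i < dim_row (c \<cdot>\<^sub>m 1\<^sub>m n)" "j < dim_col (c \<cdot>\<^sub>m 1\<^sub>m n)"
  then have ij: "i < n" "j < n" by auto
  have "T $$ (i, j) = (T *\<^sub>v unit_vec n j) $ i"
    using T ij by simp
  also have "\<dots> = (c \<cdot>\<^sub>m 1\<^sub>m n) $$ (i, j)"
    using Tw ij by simp
  finally show "T $$ (i, j) = (c \<cdot>\<^sub>m 1\<^sub>m n) $$ (i, j)" .
qed (use T in auto)

lemma schur_lemma:
  assumes irr: "irreducible_rep G n \<rho>" and T: "T \<in> carrier_mat n n"
    and commute: "\<And>g. g \<in> carrier G \<Longrightarrow> T * \<rho> g = \<rho> g * T"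
  shows "\<exists>c. T = c \<cdot>\<^sub>m 1\<^sub>m n"
proof -
  have rep: "\<And>g. g \<in> carrier G \<Longrightarrow> \<rho> g \<in> carrier_mat n n" and "n > 0"
    using irr by (auto simp: irreducible_rep_def complex_rep_def)
  obtain c v where v: "eigenvector T v c"
    using spectrum_non_empty[OF T \<open>n > 0\<close>] by (auto simp: spectrum_def eigenvalue_def)
  define W where "W = {w \<in> carrier_vec n. T *\<^sub>v w = c \<cdot>\<^sub>v w}"
  have "\<rho> g *\<^sub>v w \<in> W" if g: "g \<in> carrier G" and w: "w \<in> W" for g w
  proof -
    have "T *\<^sub>v (\<rho> g *\<^sub>v w) = \<rho> g *\<^sub>v (T *\<^sub>v w)"
      using T rep[OF g] w commute[OF g]
      by (simp add: W_def assoc_mult_mat_vec[symmetric, of _ n n])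
    also have "\<dots> = c \<cdot>\<^sub>v (\<rho> g *\<^sub>v w)"
      using rep[OF g] w by (simp add: W_def mult_mat_vec)
    finally show ?thesis
      using rep[OF g] w by (simp add: W_def)
  qed
  moreover have "v \<in> W" "v \<noteq> 0\<^sub>v n"
    using v T by (auto simp: eigenvector_def W_def)
  ultimately have "W = carrier_vec n"
    using irr subspace_vec_eigenspace[OF T] unfolding irreducible_rep_def W_def by blast
  then have "T = c \<cdot>\<^sub>m 1\<^sub>m n"
    using mat_eq_smult_one_if_mult_vec[OF T] unfolding W_def by blast
  then show ?thesis ..
qed

locale irrep = group G for G (structure) +
  fixes n :: nat and \<rho> :: "'a \<Rightarrow> complex mat"
  assumes irreducible: "irreducible_rep G n \<rho>"
begin

lemma degree_pos: "n > 0"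
  using irreducible by (simp add: irreducible_rep_def)

lemma rep_carrier [simp]: "g \<in> carrier G \<Longrightarrow> \<rho> g \<in> carrier_mat n n"
  and rep_one: "\<rho> \<one> = 1\<^sub>m n"
  and rep_mult: "g \<in> carrier G \<Longrightarrow> h \<in> carrier G \<Longrightarrow> \<rho> (g \<otimes> h) = \<rho> g * \<rho> h"
  using irreducible by (simp_all add: irreducible_rep_def complex_rep_def)

lemmas square_mult_assoc = assoc_mult_mat[of _ n n _ n _ n] mult_carrier_mat[of _ n n _ n]

lemma rep_conj_carrier [simp]:
  "A \<in> carrier_mat n n \<Longrightarrow> x \<in> carrier G \<Longrightarrow> \<rho> (inv x) * A * \<rho> x \<in> carrier_mat n n"
  by (simp add: square_mult_assoc)

lemma rep_mult_inv: "g \<in> carrier G \<Longrightarrow> \<rho> g * \<rho> (inv g) = 1\<^sub>m n"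
  by (simp flip: rep_mult add: rep_one)

lemma mat_tr_rep_mult_commute:
  "g \<in> carrier G \<Longrightarrow> h \<in> carrier G \<Longrightarrow> mat_tr (\<rho> (g \<otimes> h)) = mat_tr (\<rho> (h \<otimes> g))"
  by (simp add: rep_mult mat_tr_mult_commute[of _ n n])

lemma bij_betw_mult_right: "g \<in> carrier G \<Longrightarrow> bij_betw (\<lambda>x. x \<otimes> g) (carrier G) (carrier G)"
  by (rule bij_betw_byWitness[where f' = "\<lambda>x. x \<otimes> inv g"]) (auto simp: m_assoc)

definition conj_sum :: "complex mat \<Rightarrow> complex mat" where
  "conj_sum A = mat_sum n (carrier G) (\<lambda>x. \<rho> (inv x) * A * \<rho> x)"

lemma conj_sum_carrier [simp]: "conj_sum A \<in> carrier_mat n n"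
  by (simp add: conj_sum_def)

lemma conj_sum_commute:
  assumes A: "A \<in> carrier_mat n n" and g: "g \<in> carrier G"
  shows "conj_sum A * \<rho> g = \<rho> g * conj_sum A"
proof -
  have "conj_sum A * \<rho> g = mat_sum n (carrier G) (\<lambda>x. \<rho> (inv x) * A * \<rho> x * \<rho> g)"
    unfolding conj_sum_def using A g by (intro mat_sum_mult) auto
  also have "\<dots> = mat_sum n (carrier G) (\<lambda>x. \<rho> (inv x) * A * \<rho> (x \<otimes> g))"
    using A g by (intro mat_sum_cong) (simp add: rep_mult square_mult_assoc)
  also have "\<dots> = mat_sum n (carrier G) (\<lambda>x. \<rho> (g \<otimes> inv x) * A * \<rho> x)"
  proof -
    have "g \<otimes> inv (x \<otimes> g) = inv x" if "x \<in> carrier G" for x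
      using that g by (simp add: inv_mult_group m_assoc[symmetric])
    then show ?thesis
      using g by (subst mat_sum_reindex[OF bij_betw_mult_right[OF g]]) (auto intro!: mat_sum_cong)
  qed
  also have "\<dots> = mat_sum n (carrier G) (\<lambda>x. \<rho> g * (\<rho> (inv x) * A * \<rho> x))"
    using A g by (intro mat_sum_cong) (simp add: rep_mult square_mult_assoc)
  also have "\<dots> = \<rho> g * conj_sum A"
    unfolding conj_sum_def using A g by (intro mult_mat_sum[symmetric]) auto
  finally show ?thesis .
qed

lemma mat_tr_conj_sum:
  assumes "A \<in> carrier_mat n n"
  shows "mat_tr (conj_sum A) = of_nat (card (carrier G)) * mat_tr A"
proof -
  have "mat_tr (conj_sum A) = (\<Sum>x\<in>carrier G. mat_tr (\<rho> (inv x) * A * \<rho> x))"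
    unfolding conj_sum_def using assms by (intro mat_tr_mat_sum) auto
  also have "\<dots> = (\<Sum>x\<in>carrier G. mat_tr A)"
    using assms by (intro sum.cong refl mat_tr_conj[of _ n]) (auto simp: rep_mult_inv)
  finally show ?thesis
    by simp
qed

lemma conj_sum_eq_scalar:
  assumes A: "A \<in> carrier_mat n n"
  shows "conj_sum A = (of_nat (card (carrier G)) * mat_tr A / of_nat n) \<cdot>\<^sub>m 1\<^sub>m n"
proof -
  obtain c where c: "conj_sum A = c \<cdot>\<^sub>m 1\<^sub>m n"
    using schur_lemma[OF irreducible conj_sum_carrier] conj_sum_commute[OF A] by blast
  then have "c * of_nat n = of_nat (card (carrier G)) * mat_tr A"
    using mat_tr_conj_sum[OF A] by (simp add: mat_tr_smult[of _ n] mat_tr_one)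
  then have "c = of_nat (card (carrier G)) * mat_tr A / of_nat n"
    using degree_pos by (simp add: eq_divide_eq)
  then show ?thesis
    using c by simp
qed

lemma sum_mat_tr_conj_mult:
  assumes B: "B \<in> carrier_mat n n" and C: "C \<in> carrier_mat n n"
  shows "(\<Sum>x\<in>carrier G. mat_tr (\<rho> (inv x) * B * \<rho> x * C))
       = of_nat (card (carrier G)) / of_nat n * mat_tr B * mat_tr C"
proof -
  have "(\<Sum>x\<in>carrier G. mat_tr (\<rho> (inv x) * B * \<rho> x * C)) = mat_tr (conj_sum B * C)"
    unfolding conj_sum_def using B C
    by (simp add: mat_sum_mult mat_tr_mat_sum square_mult_assoc)
  also have "\<dots> = of_nat (card (carrier G)) / of_nat n * mat_tr B * mat_tr C"
    using C
    by (simp add: conj_sum_eq_scalar[OF B] mult_smult_assoc_mat[of _ n n] mat_tr_smult[of _ n])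
  finally show ?thesis .
qed

lemma schur_orthogonality:
  assumes "a < n" "b < n" "c < n" "d < n"
  shows "(\<Sum>x\<in>carrier G. \<rho> (inv x) $$ (a, b) * \<rho> x $$ (c, d))
       = (if a = d \<and> b = c then of_nat (card (carrier G)) / of_nat n else 0)"
proof -
  have "(\<Sum>x\<in>carrier G. \<rho> (inv x) $$ (a, b) * \<rho> x $$ (c, d))
      = conj_sum (elementary_mat n b c) $$ (a, d)"
    using assms by (simp add: conj_sum_def index_mat_sum index_mult_elementary_mat)
  also have "\<dots> = (if a = d \<and> b = c then of_nat (card (carrier G)) / of_nat n else 0)"
    using assms by (simp add: conj_sum_eq_scalar mat_tr_elementary_mat)
  finally show ?thesis .
qed

lemma char_convolution:
  assumes g: "g \<in> carrier G"
  shows "(\<Sum>y\<in>carrier G. mat_tr (\<rho> y) * mat_tr (\<rho> (g \<otimes> inv y)))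
       = of_nat (card (carrier G)) / of_nat n * mat_tr (\<rho> g)"
proof -
  define k :: complex where "k = of_nat (card (carrier G)) / of_nat n"
  have "mat_tr (\<rho> y) * mat_tr (\<rho> (g \<otimes> inv y))
      = (\<Sum>j<n. \<Sum>l<n. \<Sum>i<n. \<rho> g $$ (j, l) * (\<rho> (inv y) $$ (l, j) * \<rho> y $$ (i, i)))"
    if y: "y \<in> carrier G" for y
    using g y
    by (simp add: rep_mult mat_tr_carrier[of _ n] mult_carrier_mat[of _ n n _ n]
        index_mult_mat_sum[of _ n n _ n] sum_distrib_left sum_distrib_right mult_ac del: index_mult_mat)
  then have "(\<Sum>y\<in>carrier G. mat_tr (\<rho> y) * mat_tr (\<rho> (g \<otimes> inv y)))
      = (\<Sum>j<n. \<Sum>l<n. \<Sum>i<n. \<rho> g $$ (j, l) * (\<Sum>y\<in>carrier G. \<rho> (inv y) $$ (l, j) * \<rho> y $$ (i, i)))"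
    by (simp add: sum_distrib_left sum.swap[of _ "carrier G"])
  also have "\<dots> = (\<Sum>j<n. \<Sum>l<n. \<Sum>i<n. \<rho> g $$ (j, l) * (if l = i \<and> j = i then k else 0))"
    unfolding k_def by (simp add: schur_orthogonality)
  also have "\<dots> = (\<Sum>j<n. \<rho> g $$ (j, j) * k)"
    by (simp add: sum.delta sum.delta' if_distrib[of "\<lambda>y. _ * y"] if_distrib[of "\<lambda>y. y * _"]
        flip: if_if_eq_conj cong: if_cong)
  also have "\<dots> = k * mat_tr (\<rho> g)"
    using g by (simp add: mat_tr_carrier[of _ n] sum_distrib_left mult.commute)
  finally show ?thesis
    by (simp add: k_def)
qed

lemma mat_tr_rep_inv_comm:
  assumes x: "x \<in> carrier G" and y: "y \<in> carrier G" and g: "g \<in> carrier G"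
  shows "mat_tr (\<rho> (inv (comm G x y) \<otimes> g))
       = mat_tr (\<rho> (inv x) * \<rho> y * \<rho> x * \<rho> (g \<otimes> inv y))"
proof -
  have "inv (comm G x y) \<otimes> g = inv y \<otimes> (inv x \<otimes> y \<otimes> x \<otimes> g)"
    using x y g by (simp add: comm_def inv_mult_group m_assoc)
  then have "mat_tr (\<rho> (inv (comm G x y) \<otimes> g))
      = mat_tr (\<rho> ((inv x \<otimes> y \<otimes> x \<otimes> g) \<otimes> inv y))"
    using x y g by (simp add: mat_tr_rep_mult_commute)
  also have "(inv x \<otimes> y \<otimes> x \<otimes> g) \<otimes> inv y = inv x \<otimes> y \<otimes> x \<otimes> (g \<otimes> inv y)"
    using x y g by (simp add: m_assoc)
  finally show ?thesis
    using x y g by (simp add: rep_mult)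
qed

lemma char_comm_sum:
  assumes g: "g \<in> carrier G"
  shows "(\<Sum>p\<in>carrier G \<times> carrier G. mat_tr (\<rho> (inv (comm G (fst p) (snd p)) \<otimes> g)))
       = (of_nat (card (carrier G)) / of_nat n)\<^sup>2 * mat_tr (\<rho> g)"
proof -
  define k :: complex where "k = of_nat (card (carrier G)) / of_nat n"
  have "(\<Sum>p\<in>carrier G \<times> carrier G. mat_tr (\<rho> (inv (comm G (fst p) (snd p)) \<otimes> g)))
      = (\<Sum>x\<in>carrier G. \<Sum>y\<in>carrier G. mat_tr (\<rho> (inv (comm G x y) \<otimes> g)))"
    by (simp add: sum.cartesian_product split_def)
  also have "\<dots> = (\<Sum>y\<in>carrier G. \<Sum>x\<in>carrier G.
      mat_tr (\<rho> (inv x) * \<rho> y * \<rho> x * \<rho> (g \<otimes> inv y)))"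
    using g by (subst sum.swap) (simp add: mat_tr_rep_inv_comm)
  also have "\<dots> = (\<Sum>y\<in>carrier G. k * mat_tr (\<rho> y) * mat_tr (\<rho> (g \<otimes> inv y)))"
    using g by (simp add: sum_mat_tr_conj_mult k_def)
  also have "\<dots> = k * (\<Sum>y\<in>carrier G. mat_tr (\<rho> y) * mat_tr (\<rho> (g \<otimes> inv y)))"
    by (simp add: sum_distrib_left mult.assoc)
  also have "\<dots> = k\<^sup>2 * mat_tr (\<rho> g)"
    by (simp add: char_convolution[OF g] k_def power2_eq_square)
  finally show ?thesis
    by (simp add: k_def)
qed

end

lemma irr_char_irrep:
  assumes "group G" "irr_char G \<chi>"
  obtains n \<rho> where "irrep G n \<rho>" "\<And>h. h \<in> carrier G \<Longrightarrow> \<chi> h = mat_tr (\<rho> h)"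
proof -
  obtain n \<rho> where "irreducible_rep G n \<rho>" "\<forall>h\<in>carrier G. \<chi> h = mat_tr (\<rho> h)"
    using assms(2) by (auto simp: irr_char_def)
  then show thesis
    using assms(1) by (intro that[of n \<rho>]) (simp_all add: irrep_def irrep_axioms_def)
qed

lemma irr_char_one:
  assumes "group G" "irr_char G \<chi>"
  shows "\<exists>n > 0. \<chi> \<one>\<^bsub>G\<^esub> = of_nat n"
proof -
  obtain n \<rho> where \<rho>: "irrep G n \<rho>"
    and \<chi>: "\<And>h. h \<in> carrier G \<Longrightarrow> \<chi> h = mat_tr (\<rho> h)"
    using irr_char_irrep[OF assms] by blast
  interpret irrep G n \<rho> by (fact \<rho>)
  have "\<chi> \<one>\<^bsub>G\<^esub> = of_nat n"
    by (simp add: \<chi> rep_one mat_tr_one)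
  then show ?thesis
    using degree_pos by blast
qed

lemma irr_char_comm_sum:
  fixes G (structure)
  assumes G: "group G" and \<chi>: "irr_char G \<chi>" and g: "g \<in> carrier G"
  shows "(\<Sum>p\<in>carrier G \<times> carrier G. \<chi> (inv (comm G (fst p) (snd p)) \<otimes> g))
       = (of_nat (card (carrier G)) / \<chi> \<one>)\<^sup>2 * \<chi> g"
proof -
  obtain n \<rho> where \<rho>: "irrep G n \<rho>"
    and \<chi>\<rho>: "\<And>h. h \<in> carrier G \<Longrightarrow> \<chi> h = mat_tr (\<rho> h)"
    using irr_char_irrep[OF G \<chi>] by blast
  interpret irrep G n \<rho> by (fact \<rho>)
  have "(\<Sum>p\<in>carrier G \<times> carrier G. \<chi> (inv (comm G (fst p) (snd p)) \<otimes> g))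
      = (\<Sum>p\<in>carrier G \<times> carrier G. mat_tr (\<rho> (inv (comm G (fst p) (snd p)) \<otimes> g)))"
    using g by (intro sum.cong refl \<chi>\<rho>) (auto simp: comm_def)
  also have "\<dots> = (of_nat (card (carrier G)) / of_nat n)\<^sup>2 * mat_tr (\<rho> g)"
    using char_comm_sum[OF g] .
  finally show ?thesis
    using g by (simp add: \<chi>\<rho> rep_one mat_tr_one)
qed

lemma Re_virt_char: "Re (virt_char q a \<chi> h) = (\<Sum>i<q. a i * Re (\<chi> i h))"
  by (simp add: virt_char_def Re_sum)

lemma sum_xi_virt_char:
  "(\<Sum>p\<in>S. xi G g (virt_char q a \<chi>) p)
   = (\<Sum>i<q. a i * Re (\<Sum>p\<in>S. \<chi> i (inv\<^bsub>G\<^esub> (comm G (fst p) (snd p)) \<otimes>\<^bsub>G\<^esub> g)))"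
  by (simp add: xi_def Re_virt_char Re_sum sum_distrib_left sum.swap[of _ S])

lemma expect_xi_virt_char:
  assumes G: "group G" and fin: "finite (carrier G)" and irr: "\<forall>i<q. irr_char G (\<chi> i)"
    and g: "g \<in> carrier G"
  shows "expect_GG G (xi G g (virt_char q a \<chi>))
       = (\<Sum>i<q. a i / (Re (\<chi> i \<one>\<^bsub>G\<^esub>))\<^sup>2 * Re (\<chi> i g))"
proof -
  interpret group G by (fact G)
  define m where "m = card (carrier G)"
  have "m > 0"
    using fin by (auto simp: m_def card_gt_0_iff)
  have summand: "a i * Re ((of_nat m / \<chi> i \<one>\<^bsub>G\<^esub>)\<^sup>2 * \<chi> i g) / (real m)\<^sup>2
      = a i / (Re (\<chi> i \<one>\<^bsub>G\<^esub>))\<^sup>2 * Re (\<chi> i g)" if "i < q" for i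
  proof -
    obtain d where "d > 0" "\<chi> i \<one>\<^bsub>G\<^esub> = of_nat d"
      using irr_char_one[OF G] irr \<open>i < q\<close> by blast
    moreover have "(of_nat m / of_nat d :: complex)\<^sup>2 = of_real ((real m / real d)\<^sup>2)"
      by simp
    ultimately show ?thesis
      using \<open>m > 0\<close> by (simp add: field_simps)
  qed
  have "expect_GG G (xi G g (virt_char q a \<chi>))
      = (\<Sum>i<q. a i * Re ((of_nat m / \<chi> i \<one>\<^bsub>G\<^esub>)\<^sup>2 * \<chi> i g)) / (real m)\<^sup>2"
    using G irr g unfolding expect_GG_def sum_xi_virt_char
    by (simp add: irr_char_comm_sum card_cartesian_product m_def power2_eq_square)
  also have "\<dots> = (\<Sum>i<q. a i / (Re (\<chi> i \<one>\<^bsub>G\<^esub>))\<^sup>2 * Re (\<chi> i g))"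
    unfolding sum_divide_distrib using summand by simp
  finally show ?thesis .
qed

lemma comm_prob_le_expect_xi:
  assumes G: "group G" and fin: "finite (carrier G)"
    and nonneg: "\<forall>h\<in>carrier G. 0 \<le> Re (\<phi> h)" and pos: "0 < Re (\<phi> \<one>\<^bsub>G\<^esub>)"
    and g: "g \<in> carrier G"
  shows "comm_prob G g \<le> expect_GG G (xi G g \<phi>) / Re (\<phi> \<one>\<^bsub>G\<^esub>)"
proof -
  define C where "C = {(x, y). x \<in> carrier G \<and> y \<in> carrier G \<and> comm G x y = g}"
  have "real (card C) * Re (\<phi> \<one>\<^bsub>G\<^esub>) = (\<Sum>p\<in>C. xi G g \<phi> p)"
    using G g by (simp add: C_def xi_def group.l_inv split_def)
  also have "\<dots> \<le> (\<Sum>p\<in>carrier G \<times> carrier G. xi G g \<phi> p)"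
    using G g fin nonneg
    by (intro sum_mono2)
      (auto simp: C_def xi_def comm_def group.inv_closed monoid.m_closed group.is_monoid)
  finally have "real (card C)
      \<le> (\<Sum>p\<in>carrier G \<times> carrier G. xi G g \<phi> p) / Re (\<phi> \<one>\<^bsub>G\<^esub>)"
    using pos by (simp add: le_divide_eq)
  then have "real (card C) / real (card (carrier G \<times> carrier G))
      \<le> (\<Sum>p\<in>carrier G \<times> carrier G. xi G g \<phi> p) / Re (\<phi> \<one>\<^bsub>G\<^esub>)
         / real (card (carrier G \<times> carrier G))"
    by (rule divide_right_mono) simp
  then show ?thesis
    unfolding comm_prob_def expect_GG_def C_def[symmetric]
    by (simp add: divide_divide_eq_left mult.commute)
qed

lemma nonneg_virt_char_one_pos:
  assumes G: "group G" and irr: "\<forall>i<q. irr_char G (\<chi> i)" and nn: "nonneg_virt_char G q a \<chi>"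
  shows "0 < Re (virt_char q a \<chi> \<one>\<^bsub>G\<^esub>)"
proof -
  have deg: "0 < Re (\<chi> i \<one>\<^bsub>G\<^esub>)" if "i < q" for i
    using irr_char_one[OF G] irr that by force
  obtain i0 where "i0 < q" "a i0 \<noteq> 0"
    using nn by (auto simp: nonneg_virt_char_def)
  then have "0 < a i0 * Re (\<chi> i0 \<one>\<^bsub>G\<^esub>)"
    using nn deg by (simp add: nonneg_virt_char_def order_less_le)
  then show ?thesis
    unfolding Re_virt_char using nn deg \<open>i0 < q\<close>
    by (intro sum_pos2[of _ i0]) (auto simp: nonneg_virt_char_def less_imp_le)
qed

theorem theorem1:
  fixes G :: "('a, 'b) monoid_scheme"
    and q :: nat and a :: "nat \<Rightarrow> real" and \<chi> :: "nat \<Rightarrow> 'a \<Rightarrow> complex"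
  assumes "group G" and "finite (carrier G)"
    and irr: "\<forall>i<q. irr_char G (\<chi> i)"
    and dist: "\<forall>i<q. \<forall>j<q. i \<noteq> j \<longrightarrow> restrict (\<chi> i) (carrier G) \<noteq> restrict (\<chi> j) (carrier G)"
  shows "(\<forall>g\<in>carrier G.
            expect_GG G (xi G g (virt_char q a \<chi>))
              = (\<Sum>i<q. a i / (Re (\<chi> i \<one>\<^bsub>G\<^esub>))\<^sup>2 * Re (\<chi> i g)))
       \<and> (nonneg_virt_char G q a \<chi> \<longrightarrow>
            (\<forall>g\<in>carrier G.
               comm_prob G g \<le> expect_GG G (xi G g (virt_char q a \<chi>)) / Re (virt_char q a \<chi> \<one>\<^bsub>G\<^esub>)
             \<and> expect_GG G (xi G g (virt_char q a \<chi>)) / Re (virt_char q a \<chi> \<one>\<^bsub>G\<^esub>)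
                 = (\<Sum>i<q. a i / (Re (\<chi> i \<one>\<^bsub>G\<^esub>))\<^sup>2 * Re (\<chi> i g))
                   / (\<Sum>i<q. a i * Re (\<chi> i \<one>\<^bsub>G\<^esub>)))
          \<and> comm_prob G \<one>\<^bsub>G\<^esub> \<le> (\<Sum>i<q. a i / Re (\<chi> i \<one>\<^bsub>G\<^esub>)) / (\<Sum>i<q. a i * Re (\<chi> i \<one>\<^bsub>G\<^esub>)))"
proof -
  interpret group G by fact
  have expect: "expect_GG G (xi G g (virt_char q a \<chi>))
      = (\<Sum>i<q. a i / (Re (\<chi> i \<one>\<^bsub>G\<^esub>))\<^sup>2 * Re (\<chi> i g))"
    if "g \<in> carrier G" for g
    using expect_xi_virt_char[OF \<open>group G\<close> \<open>finite (carrier G)\<close> irr that] .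
  have comm_prob_le: "comm_prob G g
      \<le> expect_GG G (xi G g (virt_char q a \<chi>)) / Re (virt_char q a \<chi> \<one>\<^bsub>G\<^esub>)"
    if "nonneg_virt_char G q a \<chi>" "g \<in> carrier G" for g
    using comm_prob_le_expect_xi[OF \<open>group G\<close> \<open>finite (carrier G)\<close> _ _ \<open>g \<in> carrier G\<close>]
      nonneg_virt_char_one_pos[OF \<open>group G\<close> irr] that
    by (simp add: nonneg_virt_char_def)
  have degree_sum: "(\<Sum>i<q. a i / (Re (\<chi> i \<one>\<^bsub>G\<^esub>))\<^sup>2 * Re (\<chi> i \<one>\<^bsub>G\<^esub>))
      = (\<Sum>i<q. a i / Re (\<chi> i \<one>\<^bsub>G\<^esub>))"
    by (intro sum.cong refl) (simp add: power2_eq_square)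
  have comm_prob_one: "comm_prob G \<one>\<^bsub>G\<^esub>
      \<le> (\<Sum>i<q. a i / Re (\<chi> i \<one>\<^bsub>G\<^esub>)) / (\<Sum>i<q. a i * Re (\<chi> i \<one>\<^bsub>G\<^esub>))"
    if "nonneg_virt_char G q a \<chi>"
    using comm_prob_le[OF that one_closed] expect[OF one_closed] degree_sum
    by (simp add: Re_virt_char)
  show ?thesis
    using expect comm_prob_le comm_prob_one by (auto simp: Re_virt_char)
qed

end
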